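(* Let $n>k\ge1$ be coprime integers, $\eta$ in the upper half-plane, $\Lambda=\mathbb{Z}+\mathbb{Z}\eta$. For every $m\in\mathbb{Z}$, $\lim_{\tau\to0}R_\tau(m\tau)=\mathrm{sym}_m$, where $\mathrm{sym}_m\in\mathrm{End}(V\otimes V)$ is defined by $\mathrm{sym}_m(v\otimes v')=v\otimes v'-m\,v'\otimes v$ (the limit taken over $\tau\in\mathbb{C}\setminus\frac1n\Lambda$ tending to $0$).
   Context: Write $e(z)=e^{2\pi i z}$ and $\theta(z)=\sum_{m\in\mathbb{Z}}(-1)^m e\big(mz+\tfrac12 m(m-1)\eta\big)$. For $\alpha\in\mathbb{Z}$ put $\theta_\alpha(z)=e\big(\alpha z+\tfrac{\alpha}{2n}+\tfrac{\alpha(\alpha-n)}{2n}\eta\big)\prod_{m=0}^{n-1}\theta\big(z+\tfrac mn+\tfrac{\alpha}{n}\eta\big)$, regarded as indexed by $\alpha\in\mathbb{Z}_n$. Let $V$ be an $n$-dimensional complex vector space with basis $x_i$, $i\in\mathbb{Z}_n$. For $\tau\in\mathbb{C}\setminus\frac1n\Lambda$ and $z\in\mathbb{C}$, define $R_\tau(z)\in\mathrm{End}(V\otimes V)$ by $$R_\tau(z)(x_i\otimes x_j)=\frac{\theta_0(-z)\cdots\theta_{n-1}(-z)}{\theta_1(0)\cdots\theta_{n-1}(0)}\sum_{r\in\mathbb{Z}_n}\frac{\theta_{j-i+r(k-1)}(-z+\tau)}{\theta_{j-i-r}(-z)\,\theta_{kr}(\tau)}\,x_{j-r}\otimes x_{i+r}.$$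 *)

theory Defs
  imports "HOL-Analysis.Analysis"
begin

definition ee :: "complex \<Rightarrow> complex" where
  "ee z = exp (2 * of_real pi * \<i> * z)"

definition theta :: "complex \<Rightarrow> complex \<Rightarrow> complex" where
  "theta \<eta> z = (\<Sum>\<^sub>\<infinity>m::int\<in>UNIV.
      (-1) powi m * ee (of_int m * z + of_int (m * (m - 1)) / 2 * \<eta>))"

text \<open>theta_alpha(z); alpha is an integer (the function is n-periodic in alpha)\<close>
definition theta_idx :: "nat \<Rightarrow> complex \<Rightarrow> int \<Rightarrow> complex \<Rightarrow> complex" where
  "theta_idx n \<eta> \<alpha> z =
     ee (of_int \<alpha> * z + of_int \<alpha> / (2 * of_nat n)
         + of_int (\<alpha> * (\<alpha> - int n)) / (2 * of_nat n) * \<eta>)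
     * (\<Prod>m<n. theta \<eta> (z + of_nat m / of_nat n + of_int \<alpha> / of_nat n * \<eta>))"

definition lattice_div :: "nat \<Rightarrow> complex \<Rightarrow> complex set" where
  "lattice_div n \<eta> = {(of_int a + of_int b * \<eta>) / of_nat n | a b. True}"

text \<open>Matrix coefficient of R_tau(z): the coefficient of x_a (x) x_b in R_tau(z)(x_i (x) x_j),
  indices in Z_n represented by integers modulo n.  The factor
  theta_0(-z)...theta_{n-1}(-z) / theta_{j-i-r}(-z) is written in cancelled form
  (product over beta in Z_n other than j-i-r), as a meromorphic identity.\<close>
definition R_coef :: "nat \<Rightarrow> int \<Rightarrow> complex \<Rightarrow> complex \<Rightarrow> complex
                      \<Rightarrow> int \<Rightarrow> int \<Rightarrow> int \<Rightarrow> int \<Rightarrow> complex" where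
  "R_coef n k \<eta> \<tau> z i j a b =
     (\<Sum>r\<in>{0..<int n}.
        if (j - r) mod int n = a mod int n \<and> (i + r) mod int n = b mod int n then
          (\<Prod>\<beta>\<in>{0..<int n} - {(j - i - r) mod int n}. theta_idx n \<eta> \<beta> (- z))
          / (\<Prod>\<beta>\<in>{1..<int n}. theta_idx n \<eta> \<beta> 0)
          * theta_idx n \<eta> (j - i + r * (k - 1)) (- z + \<tau>) / theta_idx n \<eta> (k * r) \<tau>
        else 0)"

definition sym_coef :: "nat \<Rightarrow> int \<Rightarrow> int \<Rightarrow> int \<Rightarrow> int \<Rightarrow> int \<Rightarrow> complex" where
  "sym_coef n m i j a b =
     (if a mod int n = i mod int n \<and> b mod int n = j mod int n then 1 else 0)
     - of_int m * (if a mod int n = j mod int n \<and> b mod int n = i mod int n then 1 else 0)"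

end

theory Submission
  imports Defs "HOL-Complex_Analysis.Complex_Analysis"
begin

text \<open>
  The theta function is entire, satisfies \<open>\<theta>(z + 1) = \<theta>(z)\<close>, \<open>\<theta>(z + \<eta>) = -e(-z) \<theta>(z)\<close> and
  \<open>\<theta>(0) = 0\<close>. The product \<open>J(z) = \<Prod>\<^sub>k (1 - e(z + k\<eta>)) (1 - e((k + 1)\<eta> - z))\<close> has the same
  quasi-periodicity and vanishes, to first order, exactly on \<open>\<Lambda>\<close>; so \<open>\<theta>/J\<close> extends to a bounded
  entire function and \<open>\<theta> = c J\<close> by Liouville. The constant \<open>c\<close> is nonzero, since averaging \<open>\<theta>\<close>
  over the points \<open>j/N\<close> isolates its constant Fourier coefficient \<open>1\<close> as \<open>N \<rightarrow> \<infinity>\<close>. Hence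
  \<open>\<theta>\<^sub>\<alpha>(0) \<noteq> 0\<close> unless \<open>n\<close> divides \<open>\<alpha>\<close>, while \<open>\<theta>\<^sub>0\<close> has a simple zero at \<open>0\<close>.

  In \<open>R\<^sub>\<tau>(m\<tau>)(x\<^sub>i \<otimes> x\<^sub>j)\<close> only the summand \<open>r = j - a\<close> contributes to \<open>x\<^sub>a \<otimes> x\<^sub>b\<close>. For
  \<open>r \<noteq> 0\<close> it is continuous at \<open>\<tau> = 0\<close> and tends to \<open>[a = i]\<close> (the numerator contains
  \<open>\<theta>\<^sub>0(0) = 0\<close> unless \<open>a = i\<close>); for \<open>r = 0\<close> the simple zero of \<open>\<theta>\<^sub>0\<close> gives the ratio
  \<open>\<theta>\<^sub>0(-m\<tau>)/\<theta>\<^sub>0(\<tau>) \<rightarrow> -m\<close>, or \<open>\<theta>\<^sub>0((1 - m)\<tau>)/\<theta>\<^sub>0(\<tau>) \<rightarrow> 1 - m\<close> when \<open>i = j\<close>.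
\<close>

lemma ee_add: "ee (a + b) = ee a * ee b"
  by (simp add: ee_def distrib_left exp_add)

lemma ee_minus: "ee (- a) = inverse (ee a)"
  by (simp add: ee_def exp_minus)

lemma ee_nonzero [simp]: "ee a \<noteq> 0"
  by (simp add: ee_def)

lemma ee_0 [simp]: "ee 0 = 1"
  by (simp add: ee_def)

lemma norm_ee: "norm (ee z) = exp (-2 * pi * Im z)"
  by (simp add: ee_def norm_exp_eq_Re)

lemma ee_eq_1_iff: "ee z = 1 \<longleftrightarrow> z \<in> \<int>"
proof
  assume "ee z = 1"
  then obtain m :: int where "Re (2 * of_real pi * \<i> * z) = 0"
      "Im (2 * of_real pi * \<i> * z) = of_int (2 * m) * pi"
    unfolding ee_def exp_eq_1 by blast
  then have "z = of_int m"
    by (simp add: complex_eq_iff)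
  then show "z \<in> \<int>"
    by simp
next
  assume "z \<in> \<int>"
  then obtain m :: int where "z = of_int m"
    by (elim Ints_cases)
  then show "ee z = 1"
    unfolding ee_def exp_eq_1 by (auto intro!: exI[of _ m])
qed

lemma ee_of_int [simp]: "ee (of_int m) = 1"
  by (simp add: ee_eq_1_iff)

lemma ee_add_of_int: "ee (z + of_int m) = ee z"
  by (simp add: ee_add)

lemma ee_half: "ee (1 / 2) = -1"
  by (simp add: ee_def exp_pi_i')

lemma ee_of_nat_mult: "ee (of_nat j * z) = ee z ^ j"
  by (simp add: ee_def exp_of_nat_mult[symmetric] algebra_simps)

lemma ee_sum: "finite A \<Longrightarrow> ee (\<Sum>m\<in>A. f m) = (\<Prod>m\<in>A. ee (f m))"
  unfolding ee_def sum_distrib_left by (simp add: exp_sum)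

lemma holomorphic_on_ee [holomorphic_intros]:
  "f holomorphic_on A \<Longrightarrow> (\<lambda>z. ee (f z)) holomorphic_on A"
  unfolding ee_def by (intro holomorphic_intros)

section \<open>The theta series\<close>

definition theta_term :: "complex \<Rightarrow> int \<Rightarrow> complex \<Rightarrow> complex" where
  "theta_term \<eta> m z = (-1) powi m * ee (of_int m * z + of_int (m * (m - 1)) / 2 * \<eta>)"

lemma theta_eq_infsum: "theta \<eta> z = (\<Sum>\<^sub>\<infinity>m\<in>UNIV. theta_term \<eta> m z)"
  by (simp add: theta_def theta_term_def)

lemma theta_term_holomorphic [holomorphic_intros]: "theta_term \<eta> m holomorphic_on A"
  unfolding theta_term_def ee_def by (intro holomorphic_intros)

lemma theta_term_shift: "theta_term \<eta> m z = theta_term \<eta> m 0 * ee (of_int m * z)"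
  unfolding theta_term_def by (simp add: ee_add algebra_simps)

lemma summable_exp_linear_minus_square:
  fixes c d :: real
  assumes "d > 0"
  shows "summable (\<lambda>p::nat. exp (c * p - d * p\<^sup>2))"
proof -
  define N where "N = nat \<lceil>(\<bar>c\<bar> + 1) / d\<rceil>"
  have "summable (\<lambda>p::nat. exp (-1::real) ^ p)"
    using summable_geometric[of "exp (-1::real)"] by simp
  moreover have "norm (exp (c * real p - d * (real p)\<^sup>2)) \<le> exp (-1::real) ^ p" if "p \<ge> N" for p
  proof -
    from that have "d * p \<ge> \<bar>c\<bar> + 1"
      using assms unfolding N_def by (simp add: field_simps)
    then have "d * p * p \<ge> (\<bar>c\<bar> + 1) * p"
      by (rule mult_right_mono) simp
    moreover have "c * p \<le> \<bar>c\<bar> * p"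
      by (rule mult_right_mono) auto
    ultimately have "c * real p - d * (real p)\<^sup>2 \<le> - real p"
      by (simp add: power2_eq_square algebra_simps)
    then show ?thesis
      by (simp add: exp_of_nat_mult[symmetric])
  qed
  ultimately show ?thesis
    by (rule summable_comparison_test')
qed

lemma summable_on_int_of_summable_nat_abs:
  fixes g :: "nat \<Rightarrow> real"
  assumes "summable g" "\<And>p. g p \<ge> 0"
  shows "(\<lambda>m::int. g (nat \<bar>m\<bar>)) summable_on UNIV"
proof -
  have "(\<lambda>m::int. g (nat \<bar>m\<bar>)) summable_on range int"
    using assms by (subst summable_on_reindex) (auto simp: o_def intro: norm_summable_imp_summable_on)
  moreover have "(\<lambda>m::int. g (nat \<bar>m\<bar>)) summable_on range (\<lambda>p. - int p - 1)"
  proof (subst summable_on_reindex)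
    have "(\<lambda>p. g (nat \<bar>- int p - 1\<bar>)) = (\<lambda>p. g (Suc p))"
      by (auto simp: nat_add_distrib)
    then show "((\<lambda>m. g (nat \<bar>m\<bar>)) \<circ> (\<lambda>p. - int p - 1)) summable_on UNIV"
      using assms by (auto simp: o_def summable_Suc_iff intro: norm_summable_imp_summable_on)
  qed (auto simp: inj_on_def)
  moreover have "(UNIV::int set) = range int \<union> range (\<lambda>p. - int p - 1)"
  proof (intro set_eqI iffI)
    fix m :: int
    have "m = int (nat m) \<or> m = - int (nat (- m - 1)) - 1"
      by linarith
    then show "m \<in> range int \<union> range (\<lambda>p. - int p - 1)"
      by blast
  qed auto
  moreover have "range int \<inter> range (\<lambda>p. - int p - 1) = {}"
    by auto
  ultimately show ?thesis
    by (metis summable_on_Un_disjoint)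
qed

lemma summable_on_exp_linear_minus_square:
  fixes c d :: real
  assumes "d > 0"
  shows "(\<lambda>m::int. exp (c * \<bar>m\<bar> - d * m\<^sup>2)) summable_on UNIV"
  using summable_on_int_of_summable_nat_abs[OF summable_exp_linear_minus_square[OF assms, of c]]
  by simp

lemma norm_theta_term_le:
  assumes "Im \<eta> > 0" "\<bar>Im z\<bar> \<le> R"
  shows "norm (theta_term \<eta> m z)
           \<le> exp ((2 * pi * R + pi * Im \<eta>) * \<bar>of_int m\<bar> - pi * Im \<eta> * (of_int m)\<^sup>2)"
proof -
  have "norm (theta_term \<eta> m z) = exp (-2 * pi * (m * Im z + of_int (m * (m - 1)) / 2 * Im \<eta>))"
    by (simp add: theta_term_def norm_mult norm_power_int norm_ee)
  also have "\<dots> = exp (2 * pi * (- (m * Im z)) + pi * (Im \<eta> * m) - pi * Im \<eta> * (of_int m)\<^sup>2)"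
    by (simp add: field_simps power2_eq_square)
  also have "\<dots> \<le> exp (2 * pi * (R * \<bar>of_int m\<bar>) + pi * (Im \<eta> * \<bar>of_int m\<bar>) - pi * Im \<eta> * (of_int m)\<^sup>2)"
  proof -
    have "- (m * Im z) \<le> R * \<bar>of_int m\<bar>"
      using assms(2) abs_mult[of "of_int m" "Im z"] mult_left_mono[OF assms(2), of "\<bar>of_int m\<bar>"]
      by (simp add: mult.commute)
    moreover have "Im \<eta> * m \<le> Im \<eta> * \<bar>of_int m\<bar>"
      using assms(1) by (intro mult_left_mono) auto
    ultimately show ?thesis
      by (intro exp_mono diff_right_mono add_mono mult_left_mono) (use assms(1) in auto)
  qed
  finally show ?thesis
    by (simp add: algebra_simps)
qed

lemma theta_term_summable:
  assumes "Im \<eta> > 0"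
  shows "(\<lambda>m. theta_term \<eta> m z) summable_on UNIV"
proof -
  have "(\<lambda>m::int. exp ((2 * pi * \<bar>Im z\<bar> + pi * Im \<eta>) * \<bar>m\<bar> - pi * Im \<eta> * m\<^sup>2)) summable_on UNIV"
    using assms by (intro summable_on_exp_linear_minus_square) simp
  then have "(\<lambda>m. norm (theta_term \<eta> m z)) summable_on UNIV"
    by (rule Infinite_Sum.abs_summable_on_comparison_test') (use norm_theta_term_le[OF assms] in simp)
  then show ?thesis
    by (rule Infinite_Sum.abs_summable_summable)
qed

lemma theta_holomorphic:
  assumes "Im \<eta> > 0"
  shows "theta \<eta> holomorphic_on UNIV"
proof -
  have "theta \<eta> holomorphic_on ball w 1" for w
  proof -
    define M where "M = (\<lambda>m::int. exp ((2 * pi * (\<bar>Im w\<bar> + 1) + pi * Im \<eta>) * \<bar>m\<bar> - pi * Im \<eta> * m\<^sup>2))"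
    have "norm (theta_term \<eta> m z) \<le> M m" if "z \<in> cball w 1" for m z
    proof -
      have "\<bar>Im z - Im w\<bar> \<le> 1"
        using that abs_Im_le_cmod[of "z - w"] by (simp add: dist_norm norm_minus_commute)
      then show ?thesis
        unfolding M_def by (intro norm_theta_term_le assms) linarith
    qed
    moreover have "M summable_on UNIV"
      unfolding M_def using assms by (intro summable_on_exp_linear_minus_square) simp
    ultimately have "uniform_limit (cball w 1) (\<lambda>X z. \<Sum>m\<in>X. theta_term \<eta> m z) (theta \<eta>)
                       (finite_subsets_at_top UNIV)"
      unfolding theta_eq_infsum[abs_def] by (intro Weierstrass_m_test_general) auto
    then show ?thesis
      by (rule holomorphic_uniform_limit[rotated])
         (auto intro!: always_eventually holomorphic_on_imp_continuous_on holomorphic_intros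
               simp: finite_subsets_at_top_neq_bot)
  qed
  then show ?thesis
    by (meson analytic_imp_holomorphic analytic_on_def zero_less_one)
qed

lemma theta_plus_1: "theta \<eta> (z + 1) = theta \<eta> z"
proof -
  have "theta_term \<eta> m (z + 1) = theta_term \<eta> m z" for m
    using ee_add_of_int[of "of_int m * z + of_int (m * (m - 1)) / 2 * \<eta>" m]
    by (simp add: theta_term_def algebra_simps)
  then show ?thesis
    by (simp add: theta_eq_infsum)
qed

lemma theta_plus_eta: "theta \<eta> (z + \<eta>) = - ee (- z) * theta \<eta> z"
proof -
  have shifted: "theta_term \<eta> (m - 1) (z + \<eta>) = - ee (- z) * theta_term \<eta> m z" for m
  proof -
    have arg: "of_int (m - 1) * (z + \<eta>) + of_int ((m - 1) * (m - 1 - 1)) / 2 * \<eta>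
            = - z + (of_int m * z + of_int (m * (m - 1)) / 2 * \<eta>)"
      by (simp add: field_simps)
    show ?thesis
      unfolding theta_term_def arg ee_add by (simp add: power_int_diff)
  qed
  have "theta \<eta> (z + \<eta>) = (\<Sum>\<^sub>\<infinity>m\<in>UNIV. theta_term \<eta> (m - 1) (z + \<eta>))"
    unfolding theta_eq_infsum
    by (rule infsum_reindex_bij_betw[symmetric]) (rule bij_betwI[of _ _ _ "\<lambda>m. m + 1"], auto)
  also have "\<dots> = - ee (- z) * theta \<eta> z"
    unfolding shifted theta_eq_infsum by (rule infsum_cmult_right')
  finally show ?thesis .
qed

lemma theta_0 [simp]: "theta \<eta> 0 = 0"
proof -
  have reflected: "theta_term \<eta> (1 - m) 0 = - theta_term \<eta> m 0" for m
  proof -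
    have "(-1::complex) powi (1 - m) = - ((-1) powi m)"
      by (subst power_int_minus_one_diff_commute) (simp add: power_int_diff)
    moreover have "(1 - m) * (1 - m - 1) = m * (m - 1)"
      by (simp add: algebra_simps)
    ultimately show ?thesis
      by (simp add: theta_term_def)
  qed
  have "theta \<eta> 0 = (\<Sum>\<^sub>\<infinity>m\<in>UNIV. theta_term \<eta> (1 - m) 0)"
    unfolding theta_eq_infsum
    by (rule infsum_reindex_bij_betw[symmetric]) (rule bij_betwI[of _ _ _ "\<lambda>m. 1 - m"], auto)
  also have "\<dots> = - theta \<eta> 0"
    unfolding reflected theta_eq_infsum by (rule infsum_uminus)
  finally show ?thesis
    by simp
qed

lemma convergent_prod_LIMSEQ_lessThan:
  fixes f :: "nat \<Rightarrow> 'a :: real_normed_field"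
  shows "convergent_prod f \<Longrightarrow> (\<lambda>n. \<Prod>k<n. f k) \<longlonglongrightarrow> prodinf f"
  unfolding LIMSEQ_lessThan_iff_atMost[of "prod f"] by (rule convergent_prod_LIMSEQ)

lemma holomorphic_on_prodinf:
  fixes f :: "nat \<Rightarrow> complex \<Rightarrow> complex"
  assumes "open S" and holo: "\<And>k. f k holomorphic_on S"
    and bound: "\<And>w. w \<in> S \<Longrightarrow> \<exists>r>0. cball w r \<subseteq> S \<and>
                   (\<exists>M. summable M \<and> (\<forall>k. \<forall>z\<in>cball w r. norm (f k z - 1) \<le> M k))"
  shows "(\<lambda>z. \<Prod>k. f k z) holomorphic_on S"
proof (rule holomorphic_uniform_sequence[OF \<open>open S\<close>])
  show "(\<lambda>z. \<Prod>k<N. f k z) holomorphic_on S" for N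
    by (intro holomorphic_intros holo)
  fix w assume "w \<in> S"
  from bound[OF this] obtain r M where r: "r > 0" "cball w r \<subseteq> S" and "summable M"
    and M: "\<And>k z. z \<in> cball w r \<Longrightarrow> norm (f k z - 1) \<le> M k"
    by blast
  have cont: "continuous_on (cball w r) (f k)" for k
    by (rule continuous_on_subset[OF holomorphic_on_imp_continuous_on[OF holo] r(2)])
  have "uniformly_convergent_on (cball w r) (\<lambda>N z. \<Sum>k<N. norm (f k z - 1))"
    unfolding uniformly_convergent_on_def
    by (rule exI, rule Weierstrass_m_test) (use M \<open>summable M\<close> in auto)
  then have "uniformly_convergent_on (cball w r) (\<lambda>N z. \<Prod>k<N. f k z)"
    by (rule uniformly_convergent_on_prod'[OF cont compact_cball])
  then obtain g where g: "uniform_limit (cball w r) (\<lambda>N z. \<Prod>k<N. f k z) g sequentially"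
    by (auto simp: uniformly_convergent_on_def)
  have lim: "g z = (\<Prod>k. f k z)" if "z \<in> cball w r" for z
  proof (rule LIMSEQ_unique)
    show "(\<lambda>N. \<Prod>k<N. f k z) \<longlonglongrightarrow> g z"
      using tendsto_uniform_limitI[OF g that] .
    have "summable (\<lambda>k. norm (f k z - 1))"
      by (rule summable_comparison_test[OF _ \<open>summable M\<close>]) (use M that in auto)
    then show "(\<lambda>N. \<Prod>k<N. f k z) \<longlonglongrightarrow> (\<Prod>k. f k z)"
      by (intro convergent_prod_LIMSEQ_lessThan abs_convergent_prod_imp_convergent_prod
          summable_imp_abs_convergent_prod)
  qed
  have "uniform_limit (cball w r) (\<lambda>N z. \<Prod>k<N. f k z) (\<lambda>z. \<Prod>k. f k z) sequentially
          \<longleftrightarrow> uniform_limit (cball w r) (\<lambda>N z. \<Prod>k<N. f k z) g sequentially"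
    by (rule uniform_limit_cong') (simp_all add: lim)
  with g have "uniform_limit (cball w r) (\<lambda>N z. \<Prod>k<N. f k z) (\<lambda>z. \<Prod>k. f k z) sequentially"
    by simp
  with r show "\<exists>d>0. cball w d \<subseteq> S \<and>
                 uniform_limit (cball w d) (\<lambda>N z. \<Prod>k<N. f k z) (\<lambda>z. \<Prod>k. f k z) sequentially"
    by blast
qed

section \<open>The Jacobi product\<close>

text \<open>\<open>qpoch \<eta> z\<close> is the q-Pochhammer symbol \<open>(x; q)\<^sub>\<infinity>\<close> with \<open>x = e(z)\<close>, \<open>q = e(\<eta>)\<close>.\<close>

definition qpoch :: "complex \<Rightarrow> complex \<Rightarrow> complex" where
  "qpoch \<eta> z = (\<Prod>k. 1 - ee (z + of_nat k * \<eta>))"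

lemma norm_qpoch_factor_le:
  assumes "Im \<eta> > 0" "- Im z \<le> R"
  shows "norm ((1 - ee (z + of_nat k * \<eta>)) - 1) \<le> exp (2 * pi * R) * exp (-2 * pi * Im \<eta>) ^ k"
proof -
  have "norm ((1 - ee (z + of_nat k * \<eta>)) - 1) = exp (-2 * pi * Im z + real k * (-2 * pi * Im \<eta>))"
    by (simp add: norm_ee algebra_simps)
  also have "\<dots> = exp (-2 * pi * Im z) * exp (-2 * pi * Im \<eta>) ^ k"
    by (simp only: exp_add exp_of_nat_mult)
  also have "\<dots> \<le> exp (2 * pi * R) * exp (-2 * pi * Im \<eta>) ^ k"
  proof -
    have "2 * pi * (- Im z) \<le> 2 * pi * R"
      using assms(2) by (intro mult_left_mono) auto
    then show ?thesis
      by (intro mult_right_mono) auto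
  qed
  finally show ?thesis .
qed

lemma summable_qpoch_majorant:
  assumes "Im \<eta> > 0"
  shows "summable (\<lambda>k. C * exp (-2 * pi * Im \<eta>) ^ k)"
  using assms by (intro summable_mult summable_geometric) simp

lemma qpoch_convergent:
  assumes "Im \<eta> > 0"
  shows "convergent_prod (\<lambda>k. 1 - ee (z + of_nat k * \<eta>))"
proof -
  have "summable (\<lambda>k. norm ((1 - ee (z + of_nat k * \<eta>)) - 1))"
    by (rule summable_comparison_test[OF _ summable_qpoch_majorant[OF assms]])
       (use norm_qpoch_factor_le[OF assms order_refl] in auto)
  then show ?thesis
    by (intro abs_convergent_prod_imp_convergent_prod summable_imp_abs_convergent_prod)
qed

lemma qpoch_holomorphic:
  assumes "Im \<eta> > 0"
  shows "qpoch \<eta> holomorphic_on UNIV"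
  unfolding qpoch_def[abs_def]
proof (rule holomorphic_on_prodinf)
  fix w :: complex
  have "norm ((1 - ee (z + of_nat k * \<eta>)) - 1) \<le> exp (2 * pi * (\<bar>Im w\<bar> + 1)) * exp (-2 * pi * Im \<eta>) ^ k"
    if "z \<in> cball w 1" for k z
  proof (rule norm_qpoch_factor_le[OF assms])
    show "- Im z \<le> \<bar>Im w\<bar> + 1"
      using that abs_Im_le_cmod[of "w - z"] by (auto simp: dist_norm)
  qed
  then show "\<exists>r>0. cball w r \<subseteq> UNIV \<and>
               (\<exists>M. summable M \<and> (\<forall>k. \<forall>z\<in>cball w r. norm ((1 - ee (z + of_nat k * \<eta>)) - 1) \<le> M k))"
    using summable_qpoch_majorant[OF assms]
    by (intro exI[of _ 1] conjI exI[of _ "\<lambda>k. exp (2 * pi * (\<bar>Im w\<bar> + 1)) * exp (-2 * pi * Im \<eta>) ^ k"])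
       auto
qed (auto intro!: holomorphic_intros)

lemma qpoch_nonzero:
  assumes "Im \<eta> > 0" "\<And>k. z + of_nat k * \<eta> \<notin> \<int>"
  shows "qpoch \<eta> z \<noteq> 0"
  unfolding qpoch_def
proof (rule prodinf_nonzero[OF qpoch_convergent[OF assms(1)]])
  fix k
  have "ee (z + of_nat k * \<eta>) \<noteq> 1"
    using assms(2) ee_eq_1_iff by blast
  then show "1 - ee (z + of_nat k * \<eta>) \<noteq> 0"
    by simp
qed

lemma qpoch_shift:
  assumes "Im \<eta> > 0"
  shows "qpoch \<eta> z = (1 - ee z) * qpoch \<eta> (z + \<eta>)"
proof -
  have "(\<lambda>k. 1 - ee (z + of_nat (k + 1) * \<eta>)) = (\<lambda>k. 1 - ee (z + \<eta> + of_nat k * \<eta>))"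
    by (simp add: algebra_simps)
  then have "(\<lambda>k. 1 - ee (z + of_nat k * \<eta>)) has_prod ((1 - ee z) * qpoch \<eta> (z + \<eta>))"
    using has_prod_ignore_initial_segment'[OF qpoch_convergent[OF assms, of z], of 1]
    by (simp add: qpoch_def)
  then show ?thesis
    unfolding qpoch_def by (rule has_prod_unique[THEN sym])
qed

lemma qpoch_plus_1: "qpoch \<eta> (z + 1) = qpoch \<eta> z"
proof -
  have "ee (z + 1 + of_nat k * \<eta>) = ee (z + of_nat k * \<eta>)" for k
    using ee_add_of_int[of "z + of_nat k * \<eta>" 1] by (simp add: add_ac)
  then show ?thesis
    by (simp add: qpoch_def)
qed

definition jacobi_prod :: "complex \<Rightarrow> complex \<Rightarrow> complex" where
  "jacobi_prod \<eta> z = qpoch \<eta> z * qpoch \<eta> (\<eta> - z)"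

lemma jacobi_prod_holomorphic:
  "Im \<eta> > 0 \<Longrightarrow> jacobi_prod \<eta> holomorphic_on UNIV"
  unfolding jacobi_prod_def[abs_def]
  by (intro holomorphic_intros holomorphic_on_compose_gen[OF _ qpoch_holomorphic, unfolded o_def]) auto

lemma jacobi_prod_plus_1: "jacobi_prod \<eta> (z + 1) = jacobi_prod \<eta> z"
proof -
  have "qpoch \<eta> (\<eta> - (z + 1)) = qpoch \<eta> (\<eta> - z)"
    by (metis qpoch_plus_1 diff_add_cancel diff_diff_eq)
  then show ?thesis
    by (simp add: jacobi_prod_def qpoch_plus_1)
qed

lemma jacobi_prod_split:
  "Im \<eta> > 0 \<Longrightarrow> jacobi_prod \<eta> z = (1 - ee z) * (qpoch \<eta> (z + \<eta>) * qpoch \<eta> (\<eta> - z))"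
  by (simp add: jacobi_prod_def qpoch_shift[of \<eta> z])

lemma jacobi_prod_plus_eta:
  assumes "Im \<eta> > 0"
  shows "jacobi_prod \<eta> (z + \<eta>) = - ee (- z) * jacobi_prod \<eta> z"
proof -
  have "jacobi_prod \<eta> (z + \<eta>) = qpoch \<eta> (z + \<eta>) * qpoch \<eta> (- z)"
    by (simp add: jacobi_prod_def)
  also have "\<dots> = qpoch \<eta> (z + \<eta>) * ((1 - ee (- z)) * qpoch \<eta> (\<eta> - z))"
    using qpoch_shift[OF assms, of "- z"] by simp
  also have "1 - ee (- z) = - ee (- z) * (1 - ee z)"
    by (simp add: ee_minus algebra_simps)
  also have "qpoch \<eta> (z + \<eta>) * (- ee (- z) * (1 - ee z) * qpoch \<eta> (\<eta> - z))
               = - ee (- z) * ((1 - ee z) * (qpoch \<eta> (z + \<eta>) * qpoch \<eta> (\<eta> - z)))"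
    by (simp add: mult_ac)
  finally show ?thesis
    by (simp only: jacobi_prod_split[OF assms])
qed

section \<open>The period lattice\<close>

definition lattice :: "complex \<Rightarrow> complex set" where
  "lattice \<eta> = {of_int a + of_int b * \<eta> | a b. True}"

lemma in_lattice_iff:
  assumes "Im \<eta> > 0"
  shows "of_real x + of_real y * \<eta> \<in> lattice \<eta> \<longleftrightarrow> x \<in> \<int> \<and> y \<in> \<int>"
proof
  assume "of_real x + of_real y * \<eta> \<in> lattice \<eta>"
  then obtain a b :: int where ab: "of_real x + of_real y * \<eta> = of_int a + of_int b * \<eta>"
    unfolding lattice_def by blast
  then have "Im (of_real x + of_real y * \<eta>) = Im (of_int a + of_int b * \<eta>)"
    by simp
  then have "y * Im \<eta> = b * Im \<eta>"
    by simp
  with assms have "y = b"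
    by simp
  with ab have "(of_real x :: complex) = of_int a"
    by simp
  then have "x = a"
    by (metis of_real_eq_iff of_real_of_int_eq)
  with \<open>y = b\<close> show "x \<in> \<int> \<and> y \<in> \<int>"
    by simp
next
  assume "x \<in> \<int> \<and> y \<in> \<int>"
  then obtain a b :: int where "x = a" "y = b"
    by (auto elim!: Ints_cases)
  then show "of_real x + of_real y * \<eta> \<in> lattice \<eta>"
    unfolding lattice_def by (intro CollectI exI[of _ a] exI[of _ b]) simp
qed

lemma lattice_add_iff: "l \<in> lattice \<eta> \<Longrightarrow> z + l \<in> lattice \<eta> \<longleftrightarrow> z \<in> lattice \<eta>"
proof -
  have closed: "x + y \<in> lattice \<eta>" "- x \<in> lattice \<eta>" if "x \<in> lattice \<eta>" "y \<in> lattice \<eta>" for x y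
  proof -
    from that obtain a b c d :: int where "x = of_int a + of_int b * \<eta>" "y = of_int c + of_int d * \<eta>"
      unfolding lattice_def by blast
    then have "x + y = of_int (a + c) + of_int (b + d) * \<eta>" "- x = of_int (- a) + of_int (- b) * \<eta>"
      by (simp_all add: algebra_simps)
    then show "x + y \<in> lattice \<eta>" "- x \<in> lattice \<eta>"
      unfolding lattice_def by blast+
  qed
  assume l: "l \<in> lattice \<eta>"
  then have "- l \<in> lattice \<eta>"
    using closed(2) by blast
  then show ?thesis
    using closed(1)[of "z + l" "- l"] closed(1)[of z l] l by auto
qed

lemma zero_in_lattice: "0 \<in> lattice \<eta>"
  unfolding lattice_def by (auto intro!: exI[of _ 0])

lemma lattice_periodic:
  assumes "\<And>z. f (z + 1) = f z" "\<And>z. f (z + \<eta>) = f z" "l \<in> lattice \<eta>"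
  shows "f (z + l) = f z"
proof -
  have periodic: "f (z + of_int a * p) = f z" if "\<And>z. f (z + p) = f z" for p z and a :: int
  proof (induction a rule: int_induct[where k = 0])
    case (step1 i)
    then show ?case
      using that[of "z + of_int i * p"] by (simp add: algebra_simps)
  next
    case (step2 i)
    then show ?case
      using that[of "z + of_int (i - 1) * p"] by (simp add: algebra_simps)
  qed simp
  from assms(3) obtain a b :: int where "l = of_int a + of_int b * \<eta>"
    unfolding lattice_def by blast
  then show ?thesis
    using periodic[OF assms(1), of "z + of_int b * \<eta>" a] periodic[OF assms(2), of z b]
    by (simp add: algebra_simps)
qed

lemma finite_lattice_Int_bounded:
  assumes "Im \<eta> > 0" "bounded B"
  shows "finite (lattice \<eta> \<inter> B)"
proof -
  obtain R where R: "\<And>z. z \<in> B \<Longrightarrow> norm z \<le> R"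
    using assms(2) bounded_iff by blast
  define M where "M = \<lceil>R / Im \<eta>\<rceil>"
  define N where "N = \<lceil>R + of_int M * \<bar>Re \<eta>\<bar>\<rceil>"
  have "lattice \<eta> \<inter> B \<subseteq> (\<lambda>(a, b). of_int a + of_int b * \<eta>) ` ({-N..N} \<times> {-M..M})"
  proof
    fix z assume "z \<in> lattice \<eta> \<inter> B"
    then obtain a b :: int where z: "z = of_int a + of_int b * \<eta>" and "norm z \<le> R"
      unfolding lattice_def using R by blast
    then have "\<bar>of_int b\<bar> * Im \<eta> \<le> R"
      using assms(1) abs_Im_le_cmod[of z] by (simp add: abs_mult)
    then have "\<bar>of_int b\<bar> \<le> R / Im \<eta>"
      using assms(1) by (simp add: field_simps)
    then have b: "\<bar>b\<bar> \<le> M"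
      unfolding M_def by linarith
    then have "\<bar>of_int b\<bar> * \<bar>Re \<eta>\<bar> \<le> of_int M * \<bar>Re \<eta>\<bar>"
      by (intro mult_right_mono) auto
    moreover have "\<bar>of_int a + of_int b * Re \<eta>\<bar> \<le> R"
      using abs_Re_le_cmod[of z] \<open>norm z \<le> R\<close> by (simp add: z)
    moreover have "\<bar>of_int b * Re \<eta>\<bar> = \<bar>of_int b\<bar> * \<bar>Re \<eta>\<bar>"
      by (rule abs_mult)
    ultimately have "\<bar>a\<bar> \<le> N"
      unfolding N_def by linarith
    with b show "z \<in> (\<lambda>(a, b). of_int a + of_int b * \<eta>) ` ({-N..N} \<times> {-M..M})"
      by (intro image_eqI[of _ _ "(a, b)"]) (auto simp: z)
  qed
  then show ?thesis
    by (rule finite_subset) auto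
qed

lemma eventually_not_in_lattice:
  assumes "Im \<eta> > 0"
  shows "eventually (\<lambda>y. y \<notin> lattice \<eta>) (at z)"
proof -
  have "eventually (\<lambda>y. y \<notin> lattice \<eta> \<inter> ball z 1) (at z)"
    using islimpt_finite[OF finite_lattice_Int_bounded[OF assms bounded_ball]]
    by (simp add: islimpt_iff_eventually)
  moreover have "eventually (\<lambda>y. y \<in> ball z 1) (at z)"
    by (rule eventually_at_in_open') auto
  ultimately show ?thesis
    by eventually_elim auto
qed

lemma jacobi_prod_nonzero:
  assumes "Im \<eta> > 0" "z \<notin> lattice \<eta>"
  shows "jacobi_prod \<eta> z \<noteq> 0"
proof -
  have "z + of_nat k * \<eta> \<notin> \<int>" "\<eta> - z + of_nat k * \<eta> \<notin> \<int>" for k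
  proof -
    have "z \<noteq> of_int m + of_int (- int k) * \<eta>" "z \<noteq> of_int (- m) + of_int (int k + 1) * \<eta>" for m
      using assms(2) unfolding lattice_def by blast+
    moreover have "z = of_int m + of_int (- int k) * \<eta>" if "z + of_nat k * \<eta> = of_int m" for m
      using that by (simp add: algebra_simps)
    moreover have "z = of_int (- m) + of_int (int k + 1) * \<eta>" if "\<eta> - z + of_nat k * \<eta> = of_int m" for m
      using that by (simp add: algebra_simps)
    ultimately show "z + of_nat k * \<eta> \<notin> \<int>" "\<eta> - z + of_nat k * \<eta> \<notin> \<int>"
      by (auto elim!: Ints_cases)
  qed
  then show ?thesis
    unfolding jacobi_prod_def using assms(1) by (simp add: qpoch_nonzero)
qed

section \<open>The zeros of theta\<close>

definition theta_const :: "complex \<Rightarrow> complex" where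
  "theta_const \<eta> = deriv (theta \<eta>) 0 / (- (2 * pi * \<i>) * qpoch \<eta> \<eta> ^ 2)"

lemma theta_div_tendsto_deriv:
  assumes "Im \<eta> > 0"
  shows "((\<lambda>z. theta \<eta> z / z) \<longlongrightarrow> deriv (theta \<eta>) 0) (at 0)"
proof -
  have "(theta \<eta> has_field_derivative deriv (theta \<eta>) 0) (at 0)"
    using theta_holomorphic[OF assms]
    by (intro DERIV_deriv_iff_field_differentiable[THEN iffD2] holomorphic_on_imp_differentiable_at) auto
  then show ?thesis
    by (simp add: has_field_derivative_iff)
qed

lemma qpoch_eta_nonzero:
  assumes "Im \<eta> > 0"
  shows "qpoch \<eta> \<eta> \<noteq> 0"
proof (rule qpoch_nonzero[OF assms])
  fix k
  have "Im (\<eta> + of_nat k * \<eta>) \<noteq> 0"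
    using assms by (simp add: add_pos_nonneg order.strict_implies_not_eq[symmetric])
  then show "\<eta> + of_nat k * \<eta> \<notin> \<int>"
    by (simp add: complex_is_Int_iff)
qed

lemma theta_div_jacobi_prod_tendsto_0:
  assumes "Im \<eta> > 0"
  shows "((\<lambda>z. theta \<eta> z / jacobi_prod \<eta> z) \<longlongrightarrow> theta_const \<eta>) (at 0)"
proof -
  define P where "P z = qpoch \<eta> (z + \<eta>) * qpoch \<eta> (\<eta> - z)" for z
  have "continuous_on UNIV P"
    unfolding P_def[abs_def]
    by (intro holomorphic_on_imp_continuous_on holomorphic_intros
        holomorphic_on_compose_gen[OF _ qpoch_holomorphic[OF assms], unfolded o_def]) auto
  then have "(P \<longlongrightarrow> P 0) (at 0)"
    by (simp add: continuous_on_eq_continuous_at isCont_def)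
  then have "(P \<longlongrightarrow> qpoch \<eta> \<eta> ^ 2) (at 0)"
    by (simp add: P_def power2_eq_square)
  moreover have "((\<lambda>z. (1 - ee z) / z) \<longlongrightarrow> - (2 * pi * \<i>)) (at 0)"
  proof -
    have "((\<lambda>z. 1 - ee z) has_field_derivative - (2 * pi * \<i>)) (at 0)"
      unfolding ee_def by (auto intro!: derivative_eq_intros)
    then show ?thesis
      by (simp add: has_field_derivative_iff)
  qed
  ultimately have "((\<lambda>z. (theta \<eta> z / z) / ((1 - ee z) / z * P z)) \<longlongrightarrow> theta_const \<eta>) (at 0)"
    unfolding theta_const_def using qpoch_eta_nonzero[OF assms]
    by (intro tendsto_intros theta_div_tendsto_deriv[OF assms]) auto
  moreover have "(theta \<eta> z / z) / ((1 - ee z) / z * P z) = theta \<eta> z / jacobi_prod \<eta> z"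
    if "z \<noteq> 0" for z
    using that by (cases "(1 - ee z) * P z = 0") (auto simp: jacobi_prod_split[OF assms] P_def field_simps)
  then have "\<forall>\<^sub>F z in at 0. (theta \<eta> z / z) / ((1 - ee z) / z * P z) = theta \<eta> z / jacobi_prod \<eta> z"
    by (simp add: eventually_at_filter)
  ultimately show ?thesis
    by (rule Lim_transform_eventually)
qed

lemma theta_div_jacobi_prod_periodic:
  assumes "Im \<eta> > 0" "l \<in> lattice \<eta>"
  shows "theta \<eta> (z + l) / jacobi_prod \<eta> (z + l) = theta \<eta> z / jacobi_prod \<eta> z"
  by (rule lattice_periodic[OF _ _ assms(2)])
     (simp_all add: theta_plus_1 jacobi_prod_plus_1 theta_plus_eta jacobi_prod_plus_eta[OF assms(1)])

text \<open>By Liouville's theorem this function is the constant \<open>theta_const \<eta>\<close>.\<close>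

definition theta_quotient :: "complex \<Rightarrow> complex \<Rightarrow> complex" where
  "theta_quotient \<eta> z = (if z \<in> lattice \<eta> then theta_const \<eta> else theta \<eta> z / jacobi_prod \<eta> z)"

lemma theta_quotient_periodic:
  assumes "Im \<eta> > 0" "l \<in> lattice \<eta>"
  shows "theta_quotient \<eta> (z + l) = theta_quotient \<eta> z"
  using theta_div_jacobi_prod_periodic[OF assms] lattice_add_iff[OF assms(2)]
  by (simp add: theta_quotient_def)

lemma theta_quotient_tendsto_lattice:
  assumes "Im \<eta> > 0" "l \<in> lattice \<eta>"
  shows "(theta_quotient \<eta> \<longlongrightarrow> theta_quotient \<eta> l) (at l)"
proof -
  have "\<forall>\<^sub>F z in at 0. theta \<eta> z / jacobi_prod \<eta> z = theta_quotient \<eta> z"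
    using eventually_not_in_lattice[OF assms(1)] by eventually_elim (simp add: theta_quotient_def)
  then have "(theta_quotient \<eta> \<longlongrightarrow> theta_const \<eta>) (at 0)"
    by (rule Lim_transform_eventually[OF theta_div_jacobi_prod_tendsto_0[OF assms(1)]])
  then have "((\<lambda>h. theta_quotient \<eta> (l + h)) \<longlongrightarrow> theta_const \<eta>) (at 0)"
    using theta_quotient_periodic[OF assms] by (simp add: add.commute)
  then show ?thesis
    using assms(2) by (simp add: theta_quotient_def LIM_offset_zero_iff)
qed

lemma theta_quotient_holomorphic:
  assumes "Im \<eta> > 0"
  shows "theta_quotient \<eta> holomorphic_on UNIV"
proof -
  have "theta_quotient \<eta> holomorphic_on ball w 1" for w
  proof (rule no_isolated_singularity'[where K = "lattice \<eta> \<inter> ball w 1"])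
    show "finite (lattice \<eta> \<inter> ball w 1)"
      by (rule finite_lattice_Int_bounded[OF assms bounded_ball])
    show "(theta_quotient \<eta> \<longlongrightarrow> theta_quotient \<eta> z) (at z within ball w 1)"
      if "z \<in> lattice \<eta> \<inter> ball w 1" for z
      using theta_quotient_tendsto_lattice[OF assms, of z] that by (auto intro: tendsto_within_subset)
    have "(\<lambda>z. theta \<eta> z / jacobi_prod \<eta> z) holomorphic_on ball w 1 - lattice \<eta> \<inter> ball w 1"
      by (intro holomorphic_on_divide holomorphic_on_subset[OF theta_holomorphic[OF assms]]
          holomorphic_on_subset[OF jacobi_prod_holomorphic[OF assms]] jacobi_prod_nonzero[OF assms]) auto
    then show "theta_quotient \<eta> holomorphic_on ball w 1 - lattice \<eta> \<inter> ball w 1"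
      by (rule holomorphic_transform) (auto simp: theta_quotient_def)
  qed auto
  then show ?thesis
    by (meson analytic_imp_holomorphic analytic_on_def zero_less_one)
qed

lemma bounded_range_if_lattice_periodic:
  fixes f :: "complex \<Rightarrow> 'a :: real_normed_vector"
  assumes "Im \<eta> > 0" "continuous_on UNIV f" "\<And>z l. l \<in> lattice \<eta> \<Longrightarrow> f (z + l) = f z"
  shows "bounded (range f)"
proof -
  define P where "P = (\<lambda>p. of_real (fst p) + of_real (snd p) * \<eta>) ` ({0..1::real} \<times> {0..1::real})"
  have "compact P"
    unfolding P_def by (intro compact_continuous_image compact_Times compact_Icc) (auto intro!: continuous_intros)
  then have "bounded (f ` P)"
    by (intro compact_imp_bounded compact_continuous_image continuous_on_subset[OF assms(2)]) auto
  moreover have "range f \<subseteq> f ` P"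
  proof clarify
    fix z
    define t where "t = Im z / Im \<eta>"
    define s where "s = Re z - t * Re \<eta>"
    have "z = of_real s + of_real t * \<eta>"
      using assms(1) by (simp add: complex_eq_iff s_def t_def)
    also have "\<dots> = (of_real (frac s) + of_real (frac t) * \<eta>) + (of_int \<lfloor>s\<rfloor> + of_int \<lfloor>t\<rfloor> * \<eta>)"
      by (simp add: frac_def algebra_simps)
    finally have "f z = f (of_real (frac s) + of_real (frac t) * \<eta>)"
      using assms(3) unfolding lattice_def by auto
    moreover have "of_real (frac s) + of_real (frac t) * \<eta> \<in> P"
      unfolding P_def by (rule image_eqI[of _ _ "(frac s, frac t)"]) (auto simp: less_imp_le frac_lt_1)
    ultimately show "f z \<in> f ` P"
      by simp
  qed
  ultimately show ?thesis
    by (rule bounded_subset)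
qed

lemma theta_eq_theta_const_mult_jacobi_prod:
  assumes "Im \<eta> > 0" "z \<notin> lattice \<eta>"
  shows "theta \<eta> z = theta_const \<eta> * jacobi_prod \<eta> z"
proof -
  have "bounded (range (theta_quotient \<eta>))"
    using assms(1) theta_quotient_periodic[OF assms(1)]
    by (intro bounded_range_if_lattice_periodic holomorphic_on_imp_continuous_on
        theta_quotient_holomorphic)
  then obtain c where c: "\<And>x. theta_quotient \<eta> x = c"
    using Liouville_theorem[OF theta_quotient_holomorphic[OF assms(1)]] unfolding constant_on_def by blast
  have "theta \<eta> z / jacobi_prod \<eta> z = theta_const \<eta>"
    using c[of 0] c[of z] zero_in_lattice assms(2) by (simp add: theta_quotient_def)
  then show ?thesis
    using jacobi_prod_nonzero[OF assms] by (simp add: field_simps)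
qed

lemma sum_ee_roots_of_unity:
  assumes "N > 0"
  shows "(\<Sum>j<N. ee (of_int m * (of_nat j / of_nat N))) = (if int N dvd m then of_nat N else 0)"
proof -
  define w where "w = ee (of_int m / of_nat N)"
  have "(\<Sum>j<N. ee (of_int m * (of_nat j / of_nat N))) = (\<Sum>j<N. w ^ j)"
    unfolding w_def ee_of_nat_mult[symmetric] by (simp add: algebra_simps)
  also have "\<dots> = (if w = 1 then of_nat N else (1 - w ^ N) / (1 - w))"
    by (rule sum_gp_strict)
  also have "w ^ N = 1"
    using assms unfolding w_def ee_of_nat_mult[symmetric] by simp
  also have "w = 1 \<longleftrightarrow> int N dvd m"
    using assms of_int_div_of_int_in_Ints_iff[of m "int N", where 'a = complex]
    by (simp add: w_def ee_eq_1_iff)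
  finally show ?thesis
    by simp
qed

lemma has_sum_sum:
  fixes f :: "'j \<Rightarrow> 'a \<Rightarrow> 'b :: topological_comm_monoid_add"
  assumes "finite J" "\<And>j. j \<in> J \<Longrightarrow> (f j has_sum s j) A"
  shows "((\<lambda>x. \<Sum>j\<in>J. f j x) has_sum (\<Sum>j\<in>J. s j)) A"
  using assms
proof (induction J rule: finite_induct)
  case (insert x F)
  then have "(f x has_sum s x) A" "((\<lambda>y. \<Sum>j\<in>F. f j y) has_sum sum s F) A"
    by auto
  then have "((\<lambda>y. f x y + (\<Sum>j\<in>F. f j y)) has_sum (s x + sum s F)) A"
    by (rule has_sum_add)
  with insert.hyps show ?case
    by simp
qed simp

lemma sum_theta_roots_of_unity:
  assumes "Im \<eta> > 0" "N > 0"
  shows "(\<Sum>j<N. theta \<eta> (of_nat j / of_nat N))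
           = of_nat N * (\<Sum>\<^sub>\<infinity>m. if int N dvd m then theta_term \<eta> m 0 else 0)"
proof -
  have "((\<lambda>m. \<Sum>j<N. theta_term \<eta> m (of_nat j / of_nat N)) has_sum (\<Sum>j<N. theta \<eta> (of_nat j / of_nat N))) UNIV"
    unfolding theta_eq_infsum using theta_term_summable[OF assms(1)]
    by (intro has_sum_sum) auto
  moreover have "(\<Sum>j<N. theta_term \<eta> m (of_nat j / of_nat N))
                   = of_nat N * (if int N dvd m then theta_term \<eta> m 0 else 0)" for m
  proof -
    have "(\<Sum>j<N. theta_term \<eta> m (of_nat j / of_nat N))
            = theta_term \<eta> m 0 * (\<Sum>j<N. ee (of_int m * (of_nat j / of_nat N)))"
      by (subst theta_term_shift) (simp add: sum_distrib_left)
    then show ?thesis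
      unfolding sum_ee_roots_of_unity[OF assms(2)] by simp
  qed
  ultimately have "(\<Sum>j<N. theta \<eta> (of_nat j / of_nat N))
                    = (\<Sum>\<^sub>\<infinity>m. of_nat N * (if int N dvd m then theta_term \<eta> m 0 else 0))"
    by (simp add: infsumI)
  then show ?thesis
    by (simp only: infsum_cmult_right')
qed

text \<open>Only the term \<open>m = 0\<close> survives as \<open>N \<rightarrow> \<infinity>\<close>; the limits may be swapped because the
  theta series is dominated by a Gaussian independently of \<open>N\<close>.\<close>

lemma infsum_theta_term_multiples_tendsto:
  assumes "Im \<eta> > 0"
  shows "(\<lambda>N. \<Sum>\<^sub>\<infinity>m. if int N dvd m then theta_term \<eta> m 0 else 0) \<longlonglongrightarrow> 1"
proof (rule swap_uniform_limit'[where F = "finite_subsets_at_top UNIV" and S = UNIV])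
  define g where "g N m = (if int N dvd m then theta_term \<eta> m 0 else 0)" for N m
  show "\<forall>\<^sub>F X in finite_subsets_at_top UNIV.
          ((\<lambda>N. \<Sum>m\<in>X. g N m) \<longlongrightarrow> (\<Sum>m\<in>X. if m = 0 then theta_term \<eta> m 0 else 0)) sequentially"
  proof (rule eventually_finite_subsets_at_top_weakI)
    fix X :: "int set" assume "finite X"
    have "g N m = (if m = 0 then theta_term \<eta> m 0 else 0)" if "N > (\<Sum>m\<in>X. \<bar>m\<bar>)" "m \<in> X" for N m
    proof -
      have "\<bar>m\<bar> < int N"
        using member_le_sum[of m X "\<lambda>m. \<bar>m\<bar>"] that \<open>finite X\<close> by auto
      then have "int N dvd m \<longleftrightarrow> m = 0"
        using dvd_imp_le_int[of m "int N"] by auto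
      then show ?thesis
        by (simp add: g_def)
    qed
    then have "\<forall>\<^sub>F N in sequentially. (\<Sum>m\<in>X. g N m) = (\<Sum>m\<in>X. if m = 0 then theta_term \<eta> m 0 else 0)"
      unfolding eventually_sequentially
      by (intro exI[of _ "Suc (nat (\<Sum>m\<in>X. \<bar>m\<bar>))"] allI impI sum.cong) auto
    then show "((\<lambda>N. \<Sum>m\<in>X. g N m) \<longlongrightarrow> (\<Sum>m\<in>X. if m = 0 then theta_term \<eta> m 0 else 0)) sequentially"
      by (rule tendsto_eventually)
  qed
  have "\<forall>\<^sub>F X in finite_subsets_at_top UNIV. (\<Sum>m\<in>X. if m = 0 then theta_term \<eta> m 0 else 0) = 1"
    unfolding eventually_finite_subsets_at_top
    by (intro exI[of _ "{0}"]) (auto simp: sum.delta' theta_term_def)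
  then show "((\<lambda>X. \<Sum>m\<in>X. if m = 0 then theta_term \<eta> m 0 else 0) \<longlongrightarrow> 1) (finite_subsets_at_top UNIV)"
    by (rule tendsto_eventually)
  define M where "M m = exp ((2 * pi * 0 + pi * Im \<eta>) * \<bar>of_int m\<bar> - pi * Im \<eta> * (of_int m)\<^sup>2)"
    for m :: int
  have "norm (g N m) \<le> M m" for N m
    unfolding g_def M_def using norm_theta_term_le[OF assms, of 0 0 m] by auto
  moreover have "M summable_on UNIV"
    unfolding M_def using assms by (intro summable_on_exp_linear_minus_square) simp
  ultimately show "uniform_limit UNIV (\<lambda>X N. \<Sum>m\<in>X. g N m) (\<lambda>N. \<Sum>\<^sub>\<infinity>m. g N m) (finite_subsets_at_top UNIV)"
    using Weierstrass_m_test_general[of UNIV UNIV "\<lambda>m N. g N m" M] by blast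
qed (auto simp: finite_subsets_at_top_neq_bot)

lemma theta_const_nonzero:
  assumes "Im \<eta> > 0"
  shows "theta_const \<eta> \<noteq> 0"
proof
  assume "theta_const \<eta> = 0"
  have "theta \<eta> (of_nat j / of_nat N) = 0" if "j < N" for j N
  proof (cases "j = 0")
    case False
    have "\<not> int N dvd int j"
      using that False by (auto dest: zdvd_imp_le)
    then have "real j / real N \<notin> \<int>"
      using of_int_div_of_int_in_Ints_iff[of "int j" "int N", where 'a = real] that by simp
    then have "of_real (real j / real N) + of_real 0 * \<eta> \<notin> lattice \<eta>"
      by (simp only: in_lattice_iff[OF assms]) simp
    then show ?thesis
      using theta_eq_theta_const_mult_jacobi_prod[OF assms] \<open>theta_const \<eta> = 0\<close> by simp
  qed simp
  then have "(\<Sum>\<^sub>\<infinity>m. if int N dvd m then theta_term \<eta> m 0 else 0) = 0" if "N > 0" for N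
    using sum_theta_roots_of_unity[OF assms that] that by simp
  then have "(\<lambda>N. \<Sum>\<^sub>\<infinity>m. if int N dvd m then theta_term \<eta> m 0 else 0) \<longlonglongrightarrow> 0"
    by (intro tendsto_eventually) (auto simp: eventually_sequentially intro!: exI[of _ 1])
  with infsum_theta_term_multiples_tendsto[OF assms] have "(1::complex) = 0"
    by (rule LIMSEQ_unique)
  then show False
    by simp
qed

lemma theta_nonzero:
  "Im \<eta> > 0 \<Longrightarrow> z \<notin> lattice \<eta> \<Longrightarrow> theta \<eta> z \<noteq> 0"
  by (simp add: theta_eq_theta_const_mult_jacobi_prod theta_const_nonzero jacobi_prod_nonzero)

lemma deriv_theta_0_nonzero:
  "Im \<eta> > 0 \<Longrightarrow> deriv (theta \<eta>) 0 \<noteq> 0"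
  using theta_const_nonzero by (auto simp: theta_const_def)

section \<open>The functions \<open>\<theta>\<^sub>\<alpha>\<close>\<close>

lemma sum_of_nat_lessThan: "(\<Sum>m<n. (of_nat m :: 'a :: field_char_0)) = of_nat n * (of_nat n - 1) / 2"
  by (induct n) (simp_all add: field_simps)

text \<open>Shifting \<open>\<alpha>\<close> by \<open>n\<close> moves every argument of \<open>\<theta>\<close> by \<open>\<eta>\<close>; the resulting factors
  \<open>-e(-w)\<close> are exactly compensated by the change of the exponential prefactor.\<close>

lemma theta_idx_add_n:
  assumes "n > 0"
  shows "theta_idx n \<eta> (\<alpha> + int n) z = theta_idx n \<eta> \<alpha> z"
proof -
  define w where "w m = z + of_nat m / of_nat n + of_int \<alpha> / of_nat n * \<eta>" for m
  define P where "P = (\<Prod>m<n. theta \<eta> (w m))"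
  define A where "A = of_int \<alpha> * z + of_int \<alpha> / (2 * of_nat n) + of_int (\<alpha> * (\<alpha> - int n)) / (2 * of_nat n) * \<eta>"
  define A' where "A' = of_int (\<alpha> + int n) * z + of_int (\<alpha> + int n) / (2 * of_nat n)
                         + of_int ((\<alpha> + int n) * (\<alpha> + int n - int n)) / (2 * of_nat n) * \<eta>"
  have shift: "z + of_nat m / of_nat n + of_int (\<alpha> + int n) / of_nat n * \<eta> = w m + \<eta>" for m
    using assms by (simp add: w_def field_simps)
  have "(\<Prod>m<n. theta \<eta> (z + of_nat m / of_nat n + of_int (\<alpha> + int n) / of_nat n * \<eta>))
          = (\<Prod>m<n. - ee (- w m) * theta \<eta> (w m))"
    by (simp only: shift theta_plus_eta)
  also have "\<dots> = (-1) ^ n * ee (- (\<Sum>m<n. w m)) * P"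
    by (simp add: prod_uminus prod.distrib P_def ee_sum sum_negf[symmetric])
  finally have "theta_idx n \<eta> (\<alpha> + int n) z = ee A' * ((-1) ^ n * ee (- (\<Sum>m<n. w m))) * P"
    unfolding theta_idx_def A'_def by (simp add: mult.assoc)
  moreover have "ee A' * ((-1) ^ n * ee (- (\<Sum>m<n. w m))) = ee A"
  proof -
    have sum_w: "(\<Sum>m<n. w m) = of_nat n * z + (of_nat n - 1) / 2 + of_int \<alpha> * \<eta>"
      unfolding w_def using assms
      by (simp add: sum.distrib sum_divide_distrib[symmetric] sum_of_nat_lessThan field_simps)
    have "A' + - (\<Sum>m<n. w m) = A + of_int 1 + - (of_nat n * (1 / 2))"
      unfolding A'_def A_def sum_w using assms by (simp add: field_simps)
    then have "ee A' * ee (- (\<Sum>m<n. w m)) = ee (A + of_int 1 + - (of_nat n * (1 / 2)))"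
      by (simp only: ee_add[symmetric])
    also have "\<dots> = ee A * inverse (ee (1 / 2) ^ n)"
      by (simp only: ee_add ee_of_int mult_1_right ee_minus ee_of_nat_mult)
    finally have "ee A' * ee (- (\<Sum>m<n. w m)) = ee A * inverse ((-1) ^ n)"
      by (simp only: ee_half)
    then show ?thesis
      by (simp add: field_simps)
  qed
  moreover have "theta_idx n \<eta> \<alpha> z = ee A * P"
    unfolding theta_idx_def A_def P_def w_def ..
  ultimately show ?thesis
    by simp
qed

lemma theta_idx_mod:
  assumes "n > 0"
  shows "theta_idx n \<eta> (\<alpha> mod int n) z = theta_idx n \<eta> \<alpha> z"
proof -
  have "theta_idx n \<eta> (\<beta> + int n * q) z = theta_idx n \<eta> \<beta> z" for \<beta> q
  proof (induction q rule: int_induct[where k = 0])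
    case (step1 i)
    then show ?case
      using theta_idx_add_n[OF assms, of \<eta> "\<beta> + int n * i" z] by (simp add: algebra_simps)
  next
    case (step2 i)
    then show ?case
      using theta_idx_add_n[OF assms, of \<eta> "\<beta> + int n * (i - 1)" z] by (simp add: algebra_simps)
  qed simp
  from this[of "\<alpha> mod int n" "\<alpha> div int n"] show ?thesis
    by simp
qed

lemma theta_idx_cong:
  "n > 0 \<Longrightarrow> \<alpha> mod int n = \<beta> mod int n \<Longrightarrow> theta_idx n \<eta> \<alpha> z = theta_idx n \<eta> \<beta> z"
  by (metis theta_idx_mod)

lemma theta_idx_holomorphic:
  assumes "Im \<eta> > 0"
  shows "theta_idx n \<eta> \<alpha> holomorphic_on UNIV"
  unfolding theta_idx_def[abs_def]
  by (intro holomorphic_intros holomorphic_on_compose_gen[OF _ theta_holomorphic[OF assms],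
        unfolded o_def]) auto

lemma theta_idx_tendsto_0:
  assumes "Im \<eta> > 0" "(f \<longlongrightarrow> 0) F"
  shows "((\<lambda>x. theta_idx n \<eta> \<alpha> (f x)) \<longlongrightarrow> theta_idx n \<eta> \<alpha> 0) F"
proof (rule isCont_tendsto_compose[OF _ assms(2)])
  show "isCont (theta_idx n \<eta> \<alpha>) 0"
    using holomorphic_on_imp_continuous_on[OF theta_idx_holomorphic[OF assms(1)]]
    by (simp add: continuous_on_eq_continuous_at)
qed

lemma theta_idx_0_nonzero:
  assumes "Im \<eta> > 0" "n > 0" "\<not> int n dvd \<alpha>"
  shows "theta_idx n \<eta> \<alpha> 0 \<noteq> 0"
proof -
  have "real_of_int \<alpha> / real_of_int (int n) \<notin> \<int>"
    using assms(2,3) of_int_div_of_int_in_Ints_iff[of \<alpha> "int n", where 'a = real] by simp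
  then have "of_real (real m / real n) + of_real (real_of_int \<alpha> / real n) * \<eta> \<notin> lattice \<eta>" for m
    by (simp only: in_lattice_iff[OF assms(1)]) simp
  then have "theta \<eta> (of_nat m / of_nat n + of_int \<alpha> / of_nat n * \<eta>) \<noteq> 0" for m
    using theta_nonzero[OF assms(1)] by simp
  then show ?thesis
    by (simp add: theta_idx_def)
qed

lemma tendsto_ratio_at_simple_zero:
  fixes g :: "complex \<Rightarrow> complex"
  assumes "(g has_field_derivative c) (at 0)" "g 0 = 0" "c \<noteq> 0"
  shows "((\<lambda>\<tau>. g (p * \<tau>) / g \<tau>) \<longlongrightarrow> p) (at 0)"
proof (cases "p = 0")
  case False
  define G where "G = (\<lambda>w. g w / w)"
  have G: "(G \<longlongrightarrow> c) (at 0)"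
    using assms(1,2) by (simp add: G_def has_field_derivative_iff)
  have "filterlim (\<lambda>\<tau>. p * \<tau>) (at 0) (at 0)"
    using False by (auto simp: filterlim_at eventually_at_filter intro!: tendsto_eq_intros)
  then have "((\<lambda>\<tau>. p * G (p * \<tau>) / G \<tau>) \<longlongrightarrow> p * c / c) (at 0)"
    by (intro tendsto_intros filterlim_compose[OF G] G assms(3))
  moreover have "\<forall>\<^sub>F \<tau> in at 0. p * G (p * \<tau>) / G \<tau> = g (p * \<tau>) / g \<tau>"
    using False by (auto simp: eventually_at_filter G_def field_simps)
  ultimately show ?thesis
    using assms(3) by (auto intro: Lim_transform_eventually)
qed (simp add: assms(2))

lemma theta_idx_0_ratio_tendsto:
  assumes "Im \<eta> > 0" "n > 0"
  shows "((\<lambda>\<tau>. theta_idx n \<eta> 0 (p * \<tau>) / theta_idx n \<eta> 0 \<tau>) \<longlongrightarrow> p) (at 0)"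
proof -
  define S where "S z = (\<Prod>m\<in>{1..<n}. theta \<eta> (z + of_nat m / of_nat n))" for z
  have T0: "theta_idx n \<eta> 0 = (\<lambda>z. theta \<eta> z * S z)"
    using assms(2) by (simp add: fun_eq_iff theta_idx_def S_def lessThan_atLeast0 prod.atLeast_Suc_lessThan)
  have "S holomorphic_on UNIV"
    unfolding S_def[abs_def]
    by (intro holomorphic_intros holomorphic_on_compose_gen[OF _ theta_holomorphic[OF assms(1)],
          unfolded o_def]) auto
  then have "(S has_field_derivative deriv S 0) (at 0)"
    by (intro DERIV_deriv_iff_field_differentiable[THEN iffD2] holomorphic_on_imp_differentiable_at) auto
  moreover have "(theta \<eta> has_field_derivative deriv (theta \<eta>) 0) (at 0)"
    using theta_holomorphic[OF assms(1)]
    by (intro DERIV_deriv_iff_field_differentiable[THEN iffD2] holomorphic_on_imp_differentiable_at) auto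
  ultimately have "(theta_idx n \<eta> 0 has_field_derivative deriv (theta \<eta>) 0 * S 0) (at 0)"
    unfolding T0 using DERIV_mult by force
  moreover have "S 0 \<noteq> 0"
  proof -
    have "of_real (real m / real n) + of_real 0 * \<eta> \<notin> lattice \<eta>" if "m \<in> {1..<n}" for m
    proof -
      have "\<not> int n dvd int m"
        using that by (auto dest: zdvd_imp_le)
      then have "real m / real n \<notin> \<int>"
        using of_int_div_of_int_in_Ints_iff[of "int m" "int n", where 'a = real] assms(2) by simp
      then show ?thesis
        by (simp only: in_lattice_iff[OF assms(1)]) simp
    qed
    then show ?thesis
      unfolding S_def using theta_nonzero[OF assms(1)] by simp
  qed
  ultimately show ?thesis
    using deriv_theta_0_nonzero[OF assms(1)] T0
    by (intro tendsto_ratio_at_simple_zero[where c = "deriv (theta \<eta>) 0 * S 0"]) auto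
qed

lemma theta_idx_0_0: "n > 0 \<Longrightarrow> theta_idx n \<eta> 0 0 = 0"
  by (auto simp: theta_idx_def prod_zero_iff intro!: bexI[of _ 0])

lemma prod_theta_idx_0_nonzero:
  assumes "Im \<eta> > 0"
  shows "(\<Prod>\<beta>\<in>{1..<int n}. theta_idx n \<eta> \<beta> 0) \<noteq> 0"
proof -
  have "theta_idx n \<eta> \<beta> 0 \<noteq> 0" if "\<beta> \<in> {1..<int n}" for \<beta>
  proof (rule theta_idx_0_nonzero[OF assms])
    show "n > 0" "\<not> int n dvd \<beta>"
      using that zdvd_imp_le[of "int n" \<beta>] by auto
  qed
  then show ?thesis
    by (simp add: prod_zero_iff)
qed

section \<open>The limit of the R-matrix\<close>

text \<open>\<open>R_term n k \<eta> \<tau> z i j r\<close> is the coefficient of \<open>x\<^sub>j\<^sub>-\<^sub>r \<otimes> x\<^sub>i\<^sub>+\<^sub>r\<close> in \<open>R\<^sub>\<tau>(z)(x\<^sub>i \<otimes> x\<^sub>j)\<close>.\<close>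

definition R_term :: "nat \<Rightarrow> int \<Rightarrow> complex \<Rightarrow> complex \<Rightarrow> complex \<Rightarrow> int \<Rightarrow> int \<Rightarrow> int \<Rightarrow> complex" where
  "R_term n k \<eta> \<tau> z i j r =
     (\<Prod>\<beta>\<in>{0..<int n} - {(j - i - r) mod int n}. theta_idx n \<eta> \<beta> (- z))
     / (\<Prod>\<beta>\<in>{1..<int n}. theta_idx n \<eta> \<beta> 0)
     * theta_idx n \<eta> (j - i + r * (k - 1)) (- z + \<tau>) / theta_idx n \<eta> (k * r) \<tau>"

lemma R_coef_eq_R_term:
  assumes "n > 0"
  shows "R_coef n k \<eta> \<tau> z i j a b =
           (if (i + j) mod int n = (a + b) mod int n then R_term n k \<eta> \<tau> z i j ((j - a) mod int n) else 0)"
proof -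
  define r0 where "r0 = (j - a) mod int n"
  have select: "(j - r) mod int n = a mod int n \<and> (i + r) mod int n = b mod int n
          \<longleftrightarrow> r = r0 \<and> (i + j) mod int n = (a + b) mod int n" if "r \<in> {0..<int n}" for r
  proof -
    have "(j - r) mod int n = a mod int n \<longleftrightarrow> r = r0"
    proof
      assume "(j - r) mod int n = a mod int n"
      then have "(j - (j - r)) mod int n = (j - a) mod int n"
        by (rule mod_diff_cong[OF refl])
      then show "r = r0"
        using that by (simp add: r0_def)
    qed (simp add: r0_def mod_diff_right_eq)
    moreover have "(i + r0) mod int n = b mod int n \<longleftrightarrow> (i + j) mod int n = (a + b) mod int n"
      unfolding r0_def mod_add_right_eq mod_eq_dvd_iff by (simp add: algebra_simps)
    ultimately show ?thesis
      by blast
  qed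
  have "R_coef n k \<eta> \<tau> z i j a b = (\<Sum>r\<in>{0..<int n}.
               if r = r0 \<and> (i + j) mod int n = (a + b) mod int n then R_term n k \<eta> \<tau> z i j r else 0)"
    unfolding R_coef_def R_term_def by (intro sum.cong refl) (simp only: select)
  also have "\<dots> = (if (i + j) mod int n = (a + b) mod int n then R_term n k \<eta> \<tau> z i j r0 else 0)"
    using assms by (simp add: sum.delta r0_def)
  finally show ?thesis
    by (simp add: r0_def)
qed

lemma theta_idx_mult_0_nonzero:
  assumes "Im \<eta> > 0" "coprime k (int n)" "0 < r" "r < int n"
  shows "theta_idx n \<eta> (k * r) 0 \<noteq> 0"
proof (rule theta_idx_0_nonzero[OF assms(1)])
  show "n > 0"
    using assms(3,4) by simp
  show "\<not> int n dvd k * r"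
    using assms(2-4) coprime_dvd_mult_right_iff[of "int n" k r] by (auto simp: coprime_commute dest: zdvd_imp_le)
qed

lemma R_term_tendsto_R_term_0_0:
  assumes "Im \<eta> > 0" "theta_idx n \<eta> (k * r) 0 \<noteq> 0"
  shows "((\<lambda>\<tau>. R_term n k \<eta> \<tau> (c * \<tau>) i j r) \<longlongrightarrow> R_term n k \<eta> 0 0 i j r) (at 0)"
proof -
  have "((\<lambda>\<tau>. R_term n k \<eta> \<tau> (c * \<tau>) i j r) \<longlongrightarrow>
          (\<Prod>\<beta>\<in>{0..<int n} - {(j - i - r) mod int n}. theta_idx n \<eta> \<beta> 0)
          / (\<Prod>\<beta>\<in>{1..<int n}. theta_idx n \<eta> \<beta> 0)
          * theta_idx n \<eta> (j - i + r * (k - 1)) 0 / theta_idx n \<eta> (k * r) 0) (at 0)"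
    unfolding R_term_def using assms prod_theta_idx_0_nonzero[OF assms(1)]
    by (intro tendsto_intros) (auto intro!: theta_idx_tendsto_0 tendsto_eq_intros)
  then show ?thesis
    by (simp add: R_term_def)
qed

lemma R_term_0_0:
  assumes "Im \<eta> > 0" "coprime k (int n)" "0 < r" "r < int n"
  shows "R_term n k \<eta> 0 0 i j r = (if r = (j - i) mod int n then 1 else 0)"
proof (cases "r = (j - i) mod int n")
  case True
  have n: "n > 0"
    using assms by simp
  have "(j - i - r) mod int n = 0"
    using True by (simp add: mod_diff_right_eq)
  moreover have "{0..<int n} - {0} = {1..<int n}"
    by auto
  moreover have "j - i + r * (k - 1) = k * r + int n * ((j - i) div int n)"
    using True div_mult_mod_eq[of "j - i" "int n"] by (simp add: algebra_simps)
  then have "theta_idx n \<eta> (j - i + r * (k - 1)) 0 = theta_idx n \<eta> (k * r) 0"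
    by (intro theta_idx_cong[OF n]) simp
  ultimately show ?thesis
    using True prod_theta_idx_0_nonzero[OF assms(1)] theta_idx_mult_0_nonzero[OF assms]
    by (simp add: R_term_def)
next
  case False
  have "(j - i - r) mod int n \<noteq> 0"
  proof
    assume "(j - i - r) mod int n = 0"
    then have "(j - i) mod int n = r mod int n"
      by (simp add: mod_eq_dvd_iff dvd_eq_mod_eq_0)
    with False assms(3,4) show False
      by simp
  qed
  then have "(\<Prod>\<beta>\<in>{0..<int n} - {(j - i - r) mod int n}. theta_idx n \<eta> \<beta> 0) = 0"
    using assms(3,4) by (auto simp: prod_zero_iff theta_idx_0_0 intro!: bexI[of _ 0])
  with False show ?thesis
    by (simp add: R_term_def)
qed

lemma R_term_0_eq:
  assumes "n > 0"
  shows "R_term n k \<eta> \<tau> z i j 0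
           = (\<Prod>\<beta>\<in>{0..<int n} - {(j - i) mod int n}. theta_idx n \<eta> \<beta> (- z))
             / (\<Prod>\<beta>\<in>{1..<int n}. theta_idx n \<eta> \<beta> 0)
             * theta_idx n \<eta> ((j - i) mod int n) (- z + \<tau>) / theta_idx n \<eta> 0 \<tau>"
  by (simp add: R_term_def theta_idx_mod[OF assms])

lemma R_term_0_tendsto_diagonal:
  assumes "Im \<eta> > 0" "n > 0" "(j - i) mod int n = 0"
  shows "((\<lambda>\<tau>. R_term n k \<eta> \<tau> (of_int m * \<tau>) i j 0) \<longlongrightarrow> 1 - of_int m) (at 0)"
proof -
  define T where "T = theta_idx n \<eta>"
  define D where "D = (\<Prod>\<beta>\<in>{1..<int n}. T \<beta> 0)"
  have "D \<noteq> 0"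
    unfolding D_def T_def by (rule prod_theta_idx_0_nonzero[OF assms(1)])
  have "{0..<int n} - {0} = {1..<int n}"
    by auto
  moreover have "- (of_int m * \<tau>) + \<tau> = (1 - of_int m) * \<tau>" for \<tau> :: complex
    by (simp add: algebra_simps)
  ultimately have "R_term n k \<eta> \<tau> (of_int m * \<tau>) i j 0
      = (\<Prod>\<beta>\<in>{1..<int n}. T \<beta> (- (of_int m * \<tau>))) / D * (T 0 ((1 - of_int m) * \<tau>) / T 0 \<tau>)" for \<tau>
    unfolding R_term_0_eq[OF assms(2)] assms(3) T_def D_def by simp
  moreover have "((\<lambda>\<tau>. (\<Prod>\<beta>\<in>{1..<int n}. T \<beta> (- (of_int m * \<tau>))) / D * (T 0 ((1 - of_int m) * \<tau>) / T 0 \<tau>))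
                   \<longlongrightarrow> D / D * (1 - of_int m)) (at 0)"
    using \<open>D \<noteq> 0\<close> assms(1,2) unfolding D_def T_def
    by (intro tendsto_intros theta_idx_tendsto_0 theta_idx_0_ratio_tendsto) (auto intro!: tendsto_eq_intros)
  ultimately show ?thesis
    using \<open>D \<noteq> 0\<close> by simp
qed

lemma R_term_0_tendsto_off_diagonal:
  assumes "Im \<eta> > 0" "n > 0" "(j - i) mod int n \<noteq> 0"
  shows "((\<lambda>\<tau>. R_term n k \<eta> \<tau> (of_int m * \<tau>) i j 0) \<longlongrightarrow> - of_int m) (at 0)"
proof -
  define T where "T = theta_idx n \<eta>"
  define D where "D = (\<Prod>\<beta>\<in>{1..<int n}. T \<beta> 0)"
  define d where "d = (j - i) mod int n"
  have "D \<noteq> 0"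
    unfolding D_def T_def by (rule prod_theta_idx_0_nonzero[OF assms(1)])
  have "0 \<le> d" "d < int n"
    using assms(2) by (simp_all add: d_def)
  with assms(3) have d: "d \<in> {1..<int n}"
    by (simp add: d_def)
  then have "{0..<int n} - {d} = insert 0 ({1..<int n} - {d})"
    by auto
  then have "R_term n k \<eta> \<tau> (of_int m * \<tau>) i j 0
      = (T 0 ((- of_int m) * \<tau>) / T 0 \<tau>)
        * ((\<Prod>\<beta>\<in>{1..<int n} - {d}. T \<beta> (- (of_int m * \<tau>))) * T d (- (of_int m * \<tau>) + \<tau>) / D)" for \<tau>
    unfolding R_term_0_eq[OF assms(2)] d_def[symmetric] T_def[symmetric] D_def[symmetric]
    by (simp add: mult_ac)
  moreover have D_split: "(\<Prod>\<beta>\<in>{1..<int n} - {d}. T \<beta> 0) * T d 0 = D"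
    unfolding D_def using d by (simp add: prod.remove mult.commute)
  have "((\<lambda>\<tau>. (\<Prod>\<beta>\<in>{1..<int n} - {d}. T \<beta> (- (of_int m * \<tau>))) * T d (- (of_int m * \<tau>) + \<tau>))
          \<longlongrightarrow> (\<Prod>\<beta>\<in>{1..<int n} - {d}. T \<beta> 0) * T d 0) (at 0)"
    unfolding T_def using assms(1)
    by (intro tendsto_mult tendsto_prod theta_idx_tendsto_0) (auto intro!: tendsto_eq_intros)
  then have "((\<lambda>\<tau>. (T 0 ((- of_int m) * \<tau>) / T 0 \<tau>)
        * ((\<Prod>\<beta>\<in>{1..<int n} - {d}. T \<beta> (- (of_int m * \<tau>))) * T d (- (of_int m * \<tau>) + \<tau>) / D))
        \<longlongrightarrow> - of_int m * (D / D)) (at 0)"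
    unfolding D_split unfolding T_def
    by (rule tendsto_mult[OF theta_idx_0_ratio_tendsto[OF assms(1,2)] tendsto_divide[OF _ tendsto_const \<open>D \<noteq> 0\<close>]])
  ultimately show ?thesis
    using \<open>D \<noteq> 0\<close> by simp
qed

lemma R_term_tendsto:
  assumes "Im \<eta> > 0" "coprime k (int n)" "0 \<le> r" "r < int n"
  shows "((\<lambda>\<tau>. R_term n k \<eta> \<tau> (of_int m * \<tau>) i j r) \<longlongrightarrow>
           (if r = 0 then (if (j - i) mod int n = 0 then 1 else 0) - of_int m
            else if r = (j - i) mod int n then 1 else 0)) (at 0)"
proof (cases "r = 0")
  case True
  have "n > 0"
    using assms(3,4) by simp
  with True R_term_0_tendsto_diagonal[OF assms(1)] R_term_0_tendsto_off_diagonal[OF assms(1)] show ?thesis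
    by (cases "(j - i) mod int n = 0") simp_all
next
  case False
  with assms(3) have "0 < r"
    by simp
  with R_term_tendsto_R_term_0_0[OF assms(1) theta_idx_mult_0_nonzero[OF assms(1,2) _ assms(4)]]
       R_term_0_0[OF assms(1,2) _ assms(4)] False
  show ?thesis
    by simp
qed

lemma sym_coef_eq:
  assumes "i \<in> {0..<int n}" "j \<in> {0..<int n}" "a \<in> {0..<int n}" "b \<in> {0..<int n}"
  shows "sym_coef n m i j a b =
           (if (i + j) mod int n = (a + b) mod int n then
              (if (j - a) mod int n = 0 then (if (j - i) mod int n = 0 then 1 else 0) - of_int m
               else if (j - a) mod int n = (j - i) mod int n then 1 else 0)
            else 0)"
proof -
  have "i mod int n = i" "j mod int n = j" "a mod int n = a" "b mod int n = b"
    using assms by auto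
  then have sym: "sym_coef n m i j a b
                    = (if a = i \<and> b = j then 1 else 0) - of_int m * (if a = j \<and> b = i then 1 else 0)"
    unfolding sym_coef_def by (simp only:)
  have eq_if_dvd: "x = y" if "int n dvd x - y" "x \<in> {0..<int n}" "y \<in> {0..<int n}" for x y
  proof -
    have "x mod int n = y mod int n"
      using that(1) by (simp only: mod_eq_dvd_iff)
    with that(2,3) show "x = y"
      by simp
  qed
  have a_j: "(j - a) mod int n = 0 \<longleftrightarrow> a = j"
    using eq_if_dvd[OF _ assms(2,3)] by (auto simp: dvd_eq_mod_eq_0[symmetric])
  have a_i: "(j - a) mod int n = (j - i) mod int n \<longleftrightarrow> a = i"
    using eq_if_dvd[OF _ assms(1,3)] by (auto simp: mod_eq_dvd_iff)
  have i_j: "(j - i) mod int n = 0 \<longleftrightarrow> j = i"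
    using eq_if_dvd[OF _ assms(2,1)] by (auto simp: dvd_eq_mod_eq_0[symmetric])
  show ?thesis
  proof (cases "(i + j) mod int n = (a + b) mod int n")
    case False
    have "\<not> (a = i \<and> b = j)" "\<not> (a = j \<and> b = i)"
      using False by (auto simp only: add.commute)
    then have "sym_coef n m i j a b = 0"
      unfolding sym by (simp only: if_False) simp
    then show ?thesis
      by (simp only: if_not_P[OF False])
  next
    case True
    then have cong: "int n dvd (i + j) - (a + b)"
      by (simp only: mod_eq_dvd_iff)
    have b_j: "b = j" if "a = i"
      using cong that by (intro eq_if_dvd[OF _ assms(4,2)]) (simp add: dvd_diff_commute)
    have b_i: "b = i" if "a = j"
      using cong that by (intro eq_if_dvd[OF _ assms(4,1)]) (simp add: dvd_diff_commute)
    show ?thesis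
    proof (cases "a = j")
      case True
      with b_i True show ?thesis
        unfolding sym a_j i_j \<open>(i + j) mod int n = (a + b) mod int n\<close> by auto
    next
      case False
      with b_j show ?thesis
        unfolding sym a_j a_i \<open>(i + j) mod int n = (a + b) mod int n\<close> by auto
    qed
  qed
qed

lemma R_coef_tendsto_sym_coef:
  assumes "Im \<eta> > 0" "coprime k (int n)"
    and "i \<in> {0..<int n}" "j \<in> {0..<int n}" "a \<in> {0..<int n}" "b \<in> {0..<int n}"
  shows "((\<lambda>\<tau>. R_coef n k \<eta> \<tau> (of_int m * \<tau>) i j a b) \<longlongrightarrow> sym_coef n m i j a b) (at 0)"
proof (cases "(i + j) mod int n = (a + b) mod int n")
  case True
  have n: "n > 0"
    using assms(3) by simp
  then have "0 \<le> (j - a) mod int n" "(j - a) mod int n < int n"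
    by simp_all
  from R_term_tendsto[OF assms(1,2) this, of m i j] show ?thesis
    by (simp only: R_coef_eq_R_term[OF n] sym_coef_eq[OF assms(3-6)] if_P[OF True])
next
  case False
  have n: "n > 0"
    using assms(3) by simp
  show ?thesis
    by (simp only: R_coef_eq_R_term[OF n] sym_coef_eq[OF assms(3-6)] if_not_P[OF False] tendsto_const)
qed

theorem proposition5p2:
  fixes n :: nat and k m :: int and \<eta> :: complex
  assumes "1 \<le> k" and "k < int n" and "coprime k (int n)" and "Im \<eta> > 0"
  shows "\<forall>i\<in>{0..<int n}. \<forall>j\<in>{0..<int n}. \<forall>a\<in>{0..<int n}. \<forall>b\<in>{0..<int n}.
           ((\<lambda>\<tau>. R_coef n k \<eta> \<tau> (of_int m * \<tau>) i j a b) \<longlongrightarrow> sym_coef n m i j a b)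
             (at 0 within (- lattice_div n \<eta>))"
  by (intro ballI tendsto_within_subset[OF R_coef_tendsto_sym_coef[OF assms(4,3)]]) auto

end
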